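(* Let $k$ be a field and $\mathcal{R}=\mathrm{RCFM}(k)$. There are short exact sequences (extensions) of right $\mathcal{R}$-modules $$0\to\mathcal{A}\to\mathcal{B}\to\mathcal{C}\to0\qquad\text{and}\qquad 0\to\mathcal{R}\to\mathcal{B}_\infty\to\mathcal{C}_\infty\to0.$$
   Context: $\mathcal{R}=\mathrm{RCFM}(k)$ is the $k$-algebra of $\mathbb{N}_0\times\mathbb{N}_0$ row-column-finite matrices over $k$. $\mathsf{A}$: $\mathsf{a}_{i+1,i}=1$ ($i\in\mathbb{N}_0$), other entries $0$; $\mathsf{B}$: $\mathsf{b}_{\frac{n(n+1)}{2}+i,\frac{(n-1)n}{2}+i}=1$ ($n>0$, $0\le i<n$), other entries $0$. $\mathcal{A}=\mathcal{R}/\mathsf{A}\mathcal{R}$, $\mathcal{B}=\mathcal{R}/(\mathsf{I}-\mathsf{A})\mathcal{R}$, $\mathcal{C}=\mathcal{R}/(\mathsf{I}-\mathsf{A}^t)\mathcal{R}$, $\mathcal{B}_\infty=\mathcal{R}/(\mathsf{I}-\mathsf{B})\mathcal{R}$, $\mathcal{C}_\infty=\mathcal{R}/(\mathsf{I}-\mathsf{B}^t)\mathcal{R}$. *)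

theory Defs
  imports Main
begin

type_synonym 'k mat = "nat \<Rightarrow> nat \<Rightarrow> 'k"

definition RCFM :: "'k::field mat set" where
  "RCFM = {M. (\<forall>i. finite {j. M i j \<noteq> 0}) \<and> (\<forall>j. finite {i. M i j \<noteq> 0})}"

definition mzero :: "'k::field mat" where "mzero = (\<lambda>i j. 0)"
definition mident :: "'k::field mat" where "mident = (\<lambda>i j. if i = j then 1 else 0)"
definition madd :: "'k::field mat \<Rightarrow> 'k mat \<Rightarrow> 'k mat" where
  "madd M N = (\<lambda>i j. M i j + N i j)"
definition msub :: "'k::field mat \<Rightarrow> 'k mat \<Rightarrow> 'k mat" where
  "msub M N = (\<lambda>i j. M i j - N i j)"
definition mmul :: "'k::field mat \<Rightarrow> 'k mat \<Rightarrow> 'k mat" where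
  "mmul M N = (\<lambda>i j. \<Sum>l\<in>{l. M i l \<noteq> 0}. M i l * N l j)"
definition mtrans :: "'k::field mat \<Rightarrow> 'k mat" where
  "mtrans M = (\<lambda>i j. M j i)"

definition matA :: "'k::field mat" where
  "matA = (\<lambda>p q. if p = q + 1 then 1 else 0)"

definition matB :: "'k::field mat" where
  "matB = (\<lambda>p q. if (\<exists>n i. 0 < n \<and> i < n \<and> p = n * (n + 1) div 2 + i
                               \<and> q = (n - 1) * n div 2 + i) then 1 else 0)"

text \<open>The coset a + xR of the right ideal xR, and the right R-module R/xR.\<close>
definition cls :: "'k::field mat \<Rightarrow> 'k mat \<Rightarrow> 'k mat set" where
  "cls x a = {madd a (mmul x s) | s. s \<in> RCFM}"

definition quot :: "'k::field mat \<Rightarrow> 'k mat set set" where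
  "quot x = cls x ` RCFM"

definition rmod_hom :: "'k::field mat \<Rightarrow> 'k mat \<Rightarrow> ('k mat set \<Rightarrow> 'k mat set) \<Rightarrow> bool" where
  "rmod_hom x y f \<longleftrightarrow>
     (\<forall>X\<in>quot x. f X \<in> quot y) \<and>
     (\<forall>a\<in>RCFM. \<forall>b\<in>RCFM. \<forall>r\<in>RCFM. \<forall>a'\<in>RCFM. \<forall>b'\<in>RCFM.
        f (cls x a) = cls y a' \<and> f (cls x b) = cls y b' \<longrightarrow>
        f (cls x (madd (mmul a r) b)) = cls y (madd (mmul a' r) b'))"

definition short_exact :: "'k::field mat \<Rightarrow> 'k mat \<Rightarrow> 'k mat \<Rightarrow>
    ('k mat set \<Rightarrow> 'k mat set) \<Rightarrow> ('k mat set \<Rightarrow> 'k mat set) \<Rightarrow> bool" where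
  "short_exact x y z f g \<longleftrightarrow>
     rmod_hom x y f \<and> rmod_hom y z g \<and>
     inj_on f (quot x) \<and> g ` quot y = quot z \<and>
     f ` quot x = {Y \<in> quot y. g Y = cls z mzero}"

end

theory Submission
  imports Defs
begin

text \<open>
  Write \<open>P\<close> for \<open>A\<close> or \<open>B\<close>. In both cases \<open>P\<close> is the matrix of an injection \<open>\<sigma>\<close> of \<open>\<nat>\<^sub>0\<close>
  all of whose orbits are infinite (\<open>\<sigma> = Suc\<close> for \<open>A\<close>; for \<open>B\<close>, \<open>\<sigma>\<close> moves the \<open>i\<close>-th entry of
  row \<open>n\<close> of the triangle \<open>\<nat>\<^sub>0 = {0} \<union> {1,2} \<union> {3,4,5} \<union> \<dots>\<close> to the \<open>i\<close>-th entry of row \<open>n+1\<close>).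
  Hence \<open>P\<^sup>t P = I\<close>, and column finiteness forces every \<open>s\<close> with \<open>P\<^sup>t s = s\<close> to vanish, since
  \<open>s\<close> is then constant along the orbits of \<open>\<sigma>\<close>.

  Since \<open>I - P = (I - P\<^sup>t)(-P)\<close>, the identity induces an epimorphism \<open>R/(I-P)R \<rightarrow> R/(I-P\<^sup>t)R\<close>.
  Left multiplication by a matrix \<open>J\<close> with \<open>P\<^sup>t J = 0\<close>, \<open>J x = 0\<close> and \<open>J K = I - P P\<^sup>t\<close> for some \<open>K\<close>
  induces a map from \<open>R/xR\<close> onto its kernel. This map is injective as soon as \<open>J a = 0\<close> implies
  \<open>a \<in> xR\<close>, because \<open>J a = (I - P) s\<close> gives \<open>P\<^sup>t s = s\<close> and hence \<open>s = 0\<close>. For \<open>A\<close> take \<open>x = P\<close> and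
  \<open>J = I - P P\<^sup>t\<close>; for \<open>B\<^sub>\<infinity>\<close> take \<open>x = 0\<close> and \<open>J\<close> the matrix of an injection onto the complement of
  the range of \<open>\<sigma>\<close>, namely onto the last entries of the rows.
\<close>

section \<open>The ring of row-column-finite matrices\<close>

lemma mmul_eq_sum:
  assumes "finite S" "{l. M i l \<noteq> 0} \<subseteq> S"
  shows "mmul M N i j = (\<Sum>l\<in>S. M i l * N l j)"
  unfolding mmul_def using assms by (intro sum.mono_neutral_left) auto

lemma mmul_nonzero_imp:
  assumes "mmul M N i j \<noteq> 0"
  shows "\<exists>l. M i l \<noteq> 0 \<and> N l j \<noteq> 0"
proof (rule ccontr)
  assume "\<not> ?thesis"
  then have "mmul M N i j = 0" unfolding mmul_def by (intro sum.neutral) auto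
  with assms show False by simp
qed

lemma mmul_in_RCFM: assumes "M \<in> RCFM" "N \<in> RCFM" shows "mmul M N \<in> RCFM"
proof -
  have "finite {j. mmul M N i j \<noteq> 0}" for i
  proof (rule finite_subset)
    show "{j. mmul M N i j \<noteq> 0} \<subseteq> (\<Union>l\<in>{l. M i l \<noteq> 0}. {j. N l j \<noteq> 0})"
      using mmul_nonzero_imp[of M N i] by blast
    show "finite (\<Union>l\<in>{l. M i l \<noteq> 0}. {j. N l j \<noteq> 0})"
      using assms by (auto simp: RCFM_def)
  qed
  moreover have "finite {i. mmul M N i j \<noteq> 0}" for j
  proof (rule finite_subset)
    show "{i. mmul M N i j \<noteq> 0} \<subseteq> (\<Union>l\<in>{l. N l j \<noteq> 0}. {i. M i l \<noteq> 0})"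
      using mmul_nonzero_imp[of M N _ j] by blast
    show "finite (\<Union>l\<in>{l. N l j \<noteq> 0}. {i. M i l \<noteq> 0})"
      using assms by (auto simp: RCFM_def)
  qed
  ultimately show ?thesis by (simp add: RCFM_def)
qed

lemma madd_in_RCFM: assumes "M \<in> RCFM" "N \<in> RCFM" shows "madd M N \<in> RCFM"
proof -
  have "finite {j. madd M N i j \<noteq> 0}" for i
    by (rule finite_subset[of _ "{j. M i j \<noteq> 0} \<union> {j. N i j \<noteq> 0}"])
       (use assms in \<open>auto simp: RCFM_def madd_def\<close>)
  moreover have "finite {i. madd M N i j \<noteq> 0}" for j
    by (rule finite_subset[of _ "{i. M i j \<noteq> 0} \<union> {i. N i j \<noteq> 0}"])
       (use assms in \<open>auto simp: RCFM_def madd_def\<close>)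
  ultimately show ?thesis by (simp add: RCFM_def)
qed

lemma msub_in_RCFM: assumes "M \<in> RCFM" "N \<in> RCFM" shows "msub M N \<in> RCFM"
proof -
  have "finite {j. msub M N i j \<noteq> 0}" for i
    by (rule finite_subset[of _ "{j. M i j \<noteq> 0} \<union> {j. N i j \<noteq> 0}"])
       (use assms in \<open>auto simp: RCFM_def msub_def\<close>)
  moreover have "finite {i. msub M N i j \<noteq> 0}" for j
    by (rule finite_subset[of _ "{i. M i j \<noteq> 0} \<union> {i. N i j \<noteq> 0}"])
       (use assms in \<open>auto simp: RCFM_def msub_def\<close>)
  ultimately show ?thesis by (simp add: RCFM_def)
qed

lemma mzero_in_RCFM: "mzero \<in> RCFM"
  by (simp add: RCFM_def mzero_def)

lemma mident_in_RCFM: "(mident :: 'k::field mat) \<in> RCFM"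
proof -
  have "{j. (mident :: 'k mat) i j \<noteq> 0} = {i}" for i by (auto simp: mident_def)
  moreover have "{i. (mident :: 'k mat) i j \<noteq> 0} = {j}" for j by (auto simp: mident_def)
  ultimately show ?thesis by (simp add: RCFM_def)
qed

lemma mtrans_in_RCFM: "M \<in> RCFM \<Longrightarrow> mtrans M \<in> RCFM"
  by (simp add: RCFM_def mtrans_def)

lemma mmul_madd_left: "mmul M (madd N N') = madd (mmul M N) (mmul M N')"
  unfolding mmul_def madd_def by (intro ext) (simp only: distrib_left sum.distrib)

lemma mmul_msub_left: "mmul M (msub N N') = msub (mmul M N) (mmul M N')"
  unfolding mmul_def msub_def by (intro ext) (simp only: right_diff_distrib sum_subtractf)

lemma mmul_msub_right:
  assumes "M \<in> RCFM" "M' \<in> RCFM"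
  shows "mmul (msub M M') N = msub (mmul M N) (mmul M' N)"
proof (intro ext)
  fix i j
  let ?S = "{l. M i l \<noteq> 0} \<union> {l. M' i l \<noteq> 0}"
  have S: "finite ?S" using assms by (simp add: RCFM_def)
  have "mmul (msub M M') N i j = (\<Sum>l\<in>?S. msub M M' i l * N l j)"
    by (rule mmul_eq_sum[OF S]) (auto simp: msub_def)
  also have "\<dots> = (\<Sum>l\<in>?S. M i l * N l j) - (\<Sum>l\<in>?S. M' i l * N l j)"
    by (simp add: msub_def left_diff_distrib sum_subtractf)
  also have "\<dots> = mmul M N i j - mmul M' N i j"
    by (simp add: mmul_eq_sum[OF S])
  finally show "mmul (msub M M') N i j = msub (mmul M N) (mmul M' N) i j"
    by (simp add: msub_def)
qed

lemma mmul_assoc: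
  assumes "a \<in> RCFM" "b \<in> RCFM"
  shows "mmul (mmul a b) c = mmul a (mmul b c)"
proof (intro ext)
  fix i j
  let ?S = "{l. a i l \<noteq> 0}"
  let ?U = "\<Union>l\<in>?S. {m. b l m \<noteq> 0}"
  have U: "finite ?U" using assms by (simp add: RCFM_def)
  have "mmul (mmul a b) c i j = (\<Sum>m\<in>?U. mmul a b i m * c m j)"
    by (rule mmul_eq_sum[OF U]) (use mmul_nonzero_imp[of a b i] in blast)
  also have "\<dots> = (\<Sum>m\<in>?U. \<Sum>l\<in>?S. a i l * b l m * c m j)"
    by (simp add: mmul_def sum_distrib_right)
  also have "\<dots> = (\<Sum>l\<in>?S. \<Sum>m\<in>?U. a i l * b l m * c m j)"
    by (rule sum.swap)
  also have "\<dots> = (\<Sum>l\<in>?S. a i l * mmul b c l j)"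
  proof (rule sum.cong[OF refl])
    fix l assume "l \<in> ?S"
    then have "mmul b c l j = (\<Sum>m\<in>?U. b l m * c m j)"
      by (intro mmul_eq_sum[OF U]) auto
    then show "(\<Sum>m\<in>?U. a i l * b l m * c m j) = a i l * mmul b c l j"
      by (simp add: sum_distrib_left mult.assoc)
  qed
  also have "\<dots> = mmul a (mmul b c) i j" by (simp add: mmul_def)
  finally show "mmul (mmul a b) c i j = mmul a (mmul b c) i j" .
qed

lemma mmul_mident_left [simp]: "mmul mident M = M"
proof (intro ext)
  fix i j
  have "{l. mident i l \<noteq> (0::'a)} = {i}" by (auto simp: mident_def)
  then show "mmul mident M i j = M i j" by (simp add: mmul_def mident_def)
qed

lemma mmul_mident_right:
  assumes "M \<in> RCFM"
  shows "mmul M mident = M"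
proof (intro ext)
  fix i j
  let ?S = "{l. M i l \<noteq> 0} \<union> {j}"
  have S: "finite ?S" using assms by (simp add: RCFM_def)
  have "mmul M mident i j = (\<Sum>l\<in>?S. M i l * mident l j)"
    by (rule mmul_eq_sum[OF S]) auto
  also have "\<dots> = (\<Sum>l\<in>{j}. M i l * mident l j)"
    by (rule sum.mono_neutral_right[OF S]) (auto simp: mident_def)
  finally show "mmul M mident i j = M i j" by (simp add: mident_def)
qed

lemma mmul_mzero_left [simp]: "mmul mzero M = mzero"
  by (simp add: mmul_def mzero_def fun_eq_iff)

lemma mmul_mzero_right [simp]: "mmul M mzero = mzero"
  by (simp add: mmul_def mzero_def fun_eq_iff)

lemma mmul_mident_minus:
  assumes "M \<in> RCFM"
  shows "mmul (msub mident M) N = msub N (mmul M N)"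
  using mmul_msub_right[OF mident_in_RCFM assms] by simp

lemma mmul_uminus: "mmul M (msub mzero N) = msub mzero (mmul M N)"
  by (simp add: mmul_msub_left)

section \<open>Right ideals and the induced maps between cyclic modules\<close>

definition rideal :: "'k::field mat \<Rightarrow> 'k mat set" where
  "rideal x = mmul x ` RCFM"

lemma mzero_in_rideal: "mzero \<in> rideal x"
  unfolding rideal_def using mzero_in_RCFM by (rule rev_image_eqI) simp

lemma madd_in_rideal:
  assumes "u \<in> rideal y" "v \<in> rideal y"
  shows "madd u v \<in> rideal y"
proof -
  obtain s t where "s \<in> RCFM" "t \<in> RCFM" "u = mmul y s" "v = mmul y t"
    using assms unfolding rideal_def by auto
  then have "madd u v = mmul y (madd s t)" "madd s t \<in> RCFM"
    by (simp_all add: mmul_madd_left madd_in_RCFM)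
  then show ?thesis unfolding rideal_def by blast
qed

lemma mmul_in_rideal:
  assumes "y \<in> RCFM" "r \<in> RCFM" "u \<in> rideal y"
  shows "mmul u r \<in> rideal y"
proof -
  obtain s where "s \<in> RCFM" "u = mmul y s" using assms unfolding rideal_def by auto
  then have "mmul u r = mmul y (mmul s r)" "mmul s r \<in> RCFM"
    using assms by (simp_all add: mmul_assoc mmul_in_RCFM)
  then show ?thesis unfolding rideal_def by blast
qed

lemma rideal_mmul_subset:
  assumes "z \<in> RCFM" "T \<in> RCFM"
  shows "rideal (mmul z T) \<subseteq> rideal z"
proof
  fix u assume "u \<in> rideal (mmul z T)"
  then obtain s where "s \<in> RCFM" "u = mmul (mmul z T) s" unfolding rideal_def by auto
  then show "u \<in> rideal z"
    unfolding rideal_def using assms by (simp add: mmul_assoc mmul_in_RCFM)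
qed

lemma cls_eq_iff:
  assumes "x \<in> RCFM" "a \<in> RCFM" "b \<in> RCFM"
  shows "cls x a = cls x b \<longleftrightarrow> msub a b \<in> rideal x"
proof
  assume eq: "cls x a = cls x b"
  have "a = madd a (mmul x mzero)" by (simp add: madd_def, simp add: mzero_def)
  then have "a \<in> cls x a" unfolding cls_def using mzero_in_RCFM by blast
  then have "a \<in> cls x b" using eq by simp
  then obtain s where "s \<in> RCFM" "a = madd b (mmul x s)" unfolding cls_def by auto
  then show "msub a b \<in> rideal x"
    unfolding rideal_def by (auto simp: madd_def msub_def fun_eq_iff)
next
  assume "msub a b \<in> rideal x"
  then obtain t where t: "t \<in> RCFM" "msub a b = mmul x t" unfolding rideal_def by auto
  show "cls x a = cls x b"
  proof (intro equalityI subsetI)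
    fix u assume "u \<in> cls x a"
    then obtain s where s: "s \<in> RCFM" "u = madd a (mmul x s)" unfolding cls_def by auto
    then have "u = madd b (mmul x (madd t s))"
      using t(2)[symmetric] by (simp add: mmul_madd_left) (simp add: madd_def msub_def fun_eq_iff)
    then show "u \<in> cls x b" unfolding cls_def using s(1) t(1) madd_in_RCFM by blast
  next
    fix u assume "u \<in> cls x b"
    then obtain s where s: "s \<in> RCFM" "u = madd b (mmul x s)" unfolding cls_def by auto
    then have "u = madd a (mmul x (msub s t))"
      using t(2)[symmetric] by (simp add: mmul_msub_left) (simp add: madd_def msub_def fun_eq_iff)
    then show "u \<in> cls x a" unfolding cls_def using s(1) t(1) msub_in_RCFM by blast
  qed
qed

definition lmul_map :: "'k::field mat \<Rightarrow> 'k mat \<Rightarrow> 'k mat \<Rightarrow> 'k mat set \<Rightarrow> 'k mat set" where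
  "lmul_map x y J X = cls y (mmul J (SOME a. a \<in> RCFM \<and> X = cls x a))"

lemma lmul_map_cls:
  assumes RCFM: "x \<in> RCFM" "y \<in> RCFM" "J \<in> RCFM" "a \<in> RCFM"
    and wd: "mmul J ` rideal x \<subseteq> rideal y"
  shows "lmul_map x y J (cls x a) = cls y (mmul J a)"
proof -
  define a0 where "a0 = (SOME a0. a0 \<in> RCFM \<and> cls x a = cls x a0)"
  have "a0 \<in> RCFM \<and> cls x a = cls x a0"
    unfolding a0_def by (rule someI[of _ a]) (use RCFM in auto)
  then have a0: "a0 \<in> RCFM" "msub a0 a \<in> rideal x"
    using cls_eq_iff[of x a0 a] RCFM by auto
  then have "msub (mmul J a0) (mmul J a) \<in> rideal y"
    using wd by (auto simp: mmul_msub_left[symmetric])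
  then have "cls y (mmul J a0) = cls y (mmul J a)"
    using cls_eq_iff RCFM a0(1) mmul_in_RCFM by blast
  then show ?thesis unfolding lmul_map_def a0_def by simp
qed

lemma rmod_hom_lmul_map:
  fixes x y J :: "'k::field mat"
  assumes RCFM: "x \<in> RCFM" "y \<in> RCFM" "J \<in> RCFM"
    and wd: "mmul J ` rideal x \<subseteq> rideal y"
  shows "rmod_hom x y (lmul_map x y J)"
  unfolding rmod_hom_def
proof (intro conjI ballI impI)
  fix X assume "X \<in> quot x"
  then show "lmul_map x y J X \<in> quot y"
    using lmul_map_cls[OF RCFM _ wd] mmul_in_RCFM[OF RCFM(3)] unfolding quot_def by auto
next
  fix a b r a' b' :: "'k mat"
  assume abr: "a \<in> RCFM" "b \<in> RCFM" "r \<in> RCFM" "a' \<in> RCFM" "b' \<in> RCFM"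
    and images: "lmul_map x y J (cls x a) = cls y a' \<and> lmul_map x y J (cls x b) = cls y b'"
  have Ja: "mmul J a \<in> RCFM" "mmul J b \<in> RCFM" using abr RCFM mmul_in_RCFM by auto
  have ar: "madd (mmul a r) b \<in> RCFM" "madd (mmul a' r) b' \<in> RCFM"
    using abr by (simp_all add: madd_in_RCFM mmul_in_RCFM)
  then have Jar: "mmul J (madd (mmul a r) b) \<in> RCFM" using RCFM mmul_in_RCFM by blast
  have "cls y (mmul J a) = cls y a'" "cls y (mmul J b) = cls y b'"
    using images lmul_map_cls[OF RCFM _ wd] abr by auto
  then have "msub a' (mmul J a) \<in> rideal y" "msub b' (mmul J b) \<in> rideal y"
    using cls_eq_iff[OF RCFM(2)] abr Ja by metis+
  then have "madd (mmul (msub a' (mmul J a)) r) (msub b' (mmul J b)) \<in> rideal y"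
    using RCFM abr by (intro madd_in_rideal mmul_in_rideal)
  moreover have "madd (mmul (msub a' (mmul J a)) r) (msub b' (mmul J b))
      = msub (madd (mmul a' r) b') (mmul J (madd (mmul a r) b))"
    using abr Ja RCFM by (simp add: mmul_msub_right mmul_madd_left mmul_assoc)
      (simp add: madd_def msub_def fun_eq_iff)
  ultimately have "cls y (madd (mmul a' r) b') = cls y (mmul J (madd (mmul a r) b))"
    using cls_eq_iff[OF RCFM(2) ar(2) Jar] by simp
  then show "lmul_map x y J (cls x (madd (mmul a r) b)) = cls y (madd (mmul a' r) b')"
    using lmul_map_cls[OF RCFM ar(1) wd] by simp
qed

lemma short_exact_lmul:
  fixes x y z J :: "'k::field mat"
  assumes RCFM: "x \<in> RCFM" "y \<in> RCFM" "z \<in> RCFM" "J \<in> RCFM"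
    and J_wd: "mmul J ` rideal x \<subseteq> rideal y"
    and yz: "rideal y \<subseteq> rideal z"
    and J_inj: "\<And>a. a \<in> RCFM \<Longrightarrow> mmul J a \<in> rideal y \<Longrightarrow> a \<in> rideal x"
    and image_sub_kernel: "\<And>a. a \<in> RCFM \<Longrightarrow> mmul J a \<in> rideal z"
    and kernel_sub_image: "\<And>a. a \<in> rideal z \<Longrightarrow> \<exists>a'\<in>RCFM. msub a (mmul J a') \<in> rideal y"
  shows "short_exact x y z (lmul_map x y J) (lmul_map y z mident)"
proof -
  let ?f = "lmul_map x y J" and ?g = "lmul_map y z mident"
  have id_wd: "mmul mident ` rideal y \<subseteq> rideal z" using yz by simp
  have f: "?f (cls x a) = cls y (mmul J a)" if "a \<in> RCFM" for a
    by (rule lmul_map_cls[OF RCFM(1,2,4) that J_wd])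
  have g: "?g (cls y a) = cls z a" if "a \<in> RCFM" for a
    using lmul_map_cls[OF RCFM(2,3) mident_in_RCFM that id_wd] by simp
  have cls_zero: "cls z a = cls z mzero \<longleftrightarrow> a \<in> rideal z" if "a \<in> RCFM" for a
    using cls_eq_iff[OF RCFM(3) that mzero_in_RCFM] by (simp add: msub_def mzero_def)
  show ?thesis
    unfolding short_exact_def
  proof (intro conjI)
    show "rmod_hom x y ?f" by (rule rmod_hom_lmul_map[OF RCFM(1,2,4) J_wd])
    show "rmod_hom y z ?g" by (rule rmod_hom_lmul_map[OF RCFM(2,3) mident_in_RCFM id_wd])
    show "inj_on ?f (quot x)"
    proof (rule inj_onI)
      fix X Y assume "X \<in> quot x" "Y \<in> quot x" and fXY: "?f X = ?f Y"
      then obtain a b where ab: "a \<in> RCFM" "b \<in> RCFM" "X = cls x a" "Y = cls x b"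
        unfolding quot_def by auto
      then have "msub (mmul J a) (mmul J b) \<in> rideal y"
        using fXY f cls_eq_iff[OF RCFM(2)] RCFM(4) mmul_in_RCFM by metis
      then have "msub a b \<in> rideal x"
        using J_inj[of "msub a b"] ab(1,2) by (simp add: mmul_msub_left msub_in_RCFM)
      then show "X = Y" using cls_eq_iff[OF RCFM(1)] ab by simp
    qed
    show "?g ` quot y = quot z"
      unfolding quot_def using g by (auto simp: image_iff)
    show "?f ` quot x = {Y \<in> quot y. ?g Y = cls z mzero}"
    proof (intro equalityI subsetI)
      fix Y assume "Y \<in> ?f ` quot x"
      then obtain a where a: "a \<in> RCFM" "Y = cls y (mmul J a)"
        unfolding quot_def using f by auto
      moreover have "mmul J a \<in> RCFM" using a(1) RCFM(4) mmul_in_RCFM by blast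
      ultimately show "Y \<in> {Y \<in> quot y. ?g Y = cls z mzero}"
        using g cls_zero image_sub_kernel unfolding quot_def by auto
    next
      fix Y assume "Y \<in> {Y \<in> quot y. ?g Y = cls z mzero}"
      then obtain a where a: "a \<in> RCFM" "Y = cls y a" "a \<in> rideal z"
        unfolding quot_def using g cls_zero by auto
      then obtain a' where a': "a' \<in> RCFM" "msub a (mmul J a') \<in> rideal y"
        using kernel_sub_image by blast
      then have "Y = ?f (cls x a')"
        using a f cls_eq_iff[OF RCFM(2)] RCFM(4) mmul_in_RCFM by metis
      then show "Y \<in> ?f ` quot x" using a'(1) unfolding quot_def by auto
    qed
  qed
qed

section \<open>Extensions from isometries\<close>

lemma short_exact_isometry:
  fixes P x J K :: "'k::field mat"
  assumes RCFM: "P \<in> RCFM" "x \<in> RCFM" "J \<in> RCFM" "K \<in> RCFM"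
    and isometry: "mmul (mtrans P) P = mident"
    and no_fixed: "\<And>s. s \<in> RCFM \<Longrightarrow> mmul (mtrans P) s = s \<Longrightarrow> s = mzero"
    and PtJ: "mmul (mtrans P) J = mzero"
    and JK: "mmul J K = msub mident (mmul P (mtrans P))"
    and Jx: "mmul J x = mzero"
    and kernel_J: "\<And>a. a \<in> RCFM \<Longrightarrow> mmul J a = mzero \<Longrightarrow> a \<in> rideal x"
  shows "\<exists>f g. short_exact x (msub mident P) (msub mident (mtrans P)) f g"
proof -
  define y where "y = msub mident P"
  define z where "z = msub mident (mtrans P)"
  have Pt: "mtrans P \<in> RCFM" using RCFM(1) by (rule mtrans_in_RCFM)
  have y: "y \<in> RCFM" unfolding y_def using mident_in_RCFM RCFM(1) by (rule msub_in_RCFM)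
  have z: "z \<in> RCFM" unfolding z_def using mident_in_RCFM Pt by (rule msub_in_RCFM)
  have mmul_y: "mmul y s = msub s (mmul P s)" for s
    unfolding y_def by (rule mmul_mident_minus[OF RCFM(1)])
  have mmul_z: "mmul z s = msub s (mmul (mtrans P) s)" for s
    unfolding z_def by (rule mmul_mident_minus[OF Pt])
  have "y = mmul z (msub mzero P)"
    unfolding mmul_z mmul_uminus isometry y_def by (simp add: msub_def mzero_def fun_eq_iff)
  then have yz: "rideal y \<subseteq> rideal z"
    using rideal_mmul_subset[OF z] msub_in_RCFM[OF mzero_in_RCFM RCFM(1)] by simp
  have J_wd: "mmul J ` rideal x \<subseteq> rideal y"
  proof
    fix u assume "u \<in> mmul J ` rideal x"
    then obtain s where "u = mmul J (mmul x s)" unfolding rideal_def by auto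
    then have "u = mzero" by (simp add: mmul_assoc[OF RCFM(3,2), symmetric] Jx)
    then show "u \<in> rideal y" by (simp add: mzero_in_rideal)
  qed
  have J_inj: "a \<in> rideal x" if a: "a \<in> RCFM" and "mmul J a \<in> rideal y" for a
  proof -
    obtain s where s: "s \<in> RCFM" "mmul J a = mmul y s"
      using \<open>mmul J a \<in> rideal y\<close> unfolding rideal_def by auto
    have "mzero = mmul (mtrans P) (mmul J a)"
      by (simp add: mmul_assoc[OF Pt RCFM(3), symmetric] PtJ)
    also have "\<dots> = msub (mmul (mtrans P) s) s"
      by (simp add: s(2) mmul_y mmul_msub_left mmul_assoc[OF Pt RCFM(1), symmetric] isometry)
    finally have "mmul (mtrans P) s = s" by (auto simp: msub_def mzero_def fun_eq_iff)
    then have "mmul J a = mzero" using no_fixed[OF s(1)] s(2) by simp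
    then show ?thesis using kernel_J a by blast
  qed
  have image_sub_kernel: "mmul J a \<in> rideal z" if "a \<in> RCFM" for a
  proof -
    have "mmul z (mmul J a) = mmul J a"
      by (simp add: mmul_z mmul_assoc[OF Pt RCFM(3), symmetric] PtJ)
        (simp add: msub_def mzero_def fun_eq_iff)
    then show ?thesis unfolding rideal_def using that RCFM(3) mmul_in_RCFM by (metis image_eqI)
  qed
  have kernel_sub_image: "\<exists>a'\<in>RCFM. msub a (mmul J a') \<in> rideal y" if a: "a \<in> rideal z" for a
  proof -
    obtain s where s: "s \<in> RCFM" "a = mmul z s" using a unfolding rideal_def by auto
    have "mmul J (mmul K s) = msub s (mmul P (mmul (mtrans P) s))"
      by (simp add: mmul_assoc[OF RCFM(3,4), symmetric] JK mmul_mident_minus mmul_in_RCFM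
          RCFM(1) Pt mmul_assoc[OF RCFM(1) Pt])
    then have "msub a (mmul J (mmul K s)) = mmul y (msub mzero (mmul (mtrans P) s))"
      by (simp add: s(2) mmul_y mmul_z mmul_uminus) (simp add: msub_def mzero_def fun_eq_iff)
    then show ?thesis
      unfolding rideal_def using s(1) RCFM Pt
      by (metis image_eqI mmul_in_RCFM msub_in_RCFM mzero_in_RCFM)
  qed
  show ?thesis
    using short_exact_lmul[OF RCFM(2) y z RCFM(3) J_wd yz J_inj image_sub_kernel kernel_sub_image]
    unfolding y_def z_def by blast
qed

lemma short_exact_isometry_range:
  fixes P :: "'k::field mat"
  assumes P: "P \<in> RCFM"
    and isometry: "mmul (mtrans P) P = mident"
    and no_fixed: "\<And>s. s \<in> RCFM \<Longrightarrow> mmul (mtrans P) s = s \<Longrightarrow> s = mzero"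
  shows "\<exists>f g. short_exact P (msub mident P) (msub mident (mtrans P)) f g"
proof -
  define E where "E = msub mident (mmul P (mtrans P))"
  have Pt: "mtrans P \<in> RCFM" using P by (rule mtrans_in_RCFM)
  have PPt: "mmul P (mtrans P) \<in> RCFM" using P Pt by (rule mmul_in_RCFM)
  have E: "E \<in> RCFM" unfolding E_def using mident_in_RCFM PPt by (rule msub_in_RCFM)
  have mmul_E: "mmul E M = msub M (mmul P (mmul (mtrans P) M))" for M
    unfolding E_def using mmul_mident_minus[OF PPt] mmul_assoc[OF P Pt] by simp
  show ?thesis
  proof (rule short_exact_isometry[OF P P E mident_in_RCFM isometry no_fixed])
    show "mmul (mtrans P) E = mzero"
      unfolding E_def
      by (simp add: mmul_msub_left mmul_mident_right[OF Pt] mmul_assoc[OF Pt P, symmetric] isometry)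
        (simp add: msub_def mzero_def fun_eq_iff)
    show "mmul E mident = msub mident (mmul P (mtrans P))"
      using mmul_mident_right[OF E] unfolding E_def .
    show "mmul E P = mzero"
      unfolding mmul_E by (simp add: isometry mmul_mident_right[OF P]) (simp add: msub_def mzero_def)
    show "a \<in> rideal P" if a: "a \<in> RCFM" and "mmul E a = mzero" for a
    proof -
      have "a = mmul P (mmul (mtrans P) a)"
        using \<open>mmul E a = mzero\<close> unfolding mmul_E by (auto simp: msub_def mzero_def fun_eq_iff)
      then show ?thesis unfolding rideal_def using mmul_in_RCFM[OF Pt a] by blast
    qed
  qed
qed

lemma short_exact_isometry_complement:
  fixes P Q :: "'k::field mat"
  assumes P: "P \<in> RCFM" and Q: "Q \<in> RCFM"
    and isometry: "mmul (mtrans P) P = mident"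
    and no_fixed: "\<And>s. s \<in> RCFM \<Longrightarrow> mmul (mtrans P) s = s \<Longrightarrow> s = mzero"
    and QtQ: "mmul (mtrans Q) Q = mident"
    and PtQ: "mmul (mtrans P) Q = mzero"
    and QQt: "mmul Q (mtrans Q) = msub mident (mmul P (mtrans P))"
  shows "\<exists>f g. short_exact mzero (msub mident P) (msub mident (mtrans P)) f g"
proof (rule short_exact_isometry[OF P mzero_in_RCFM Q mtrans_in_RCFM[OF Q] isometry no_fixed PtQ QQt
      mmul_mzero_right])
  fix a assume "a \<in> RCFM" "mmul Q a = mzero"
  then have "a = mzero" using mmul_assoc[OF mtrans_in_RCFM[OF Q] Q, of a] QtQ by simp
  then show "a \<in> rideal mzero" by (simp add: mzero_in_rideal)
qed

section \<open>Matrices of maps of \<open>\<nat>\<^sub>0\<close>\<close>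

definition mat_of_fun :: "(nat \<Rightarrow> nat) \<Rightarrow> 'k::field mat" where
  "mat_of_fun \<sigma> = (\<lambda>p q. if p = \<sigma> q then 1 else 0)"

lemma mat_of_fun_in_RCFM:
  assumes "inj \<sigma>"
  shows "(mat_of_fun \<sigma> :: 'k::field mat) \<in> RCFM"
proof -
  have "{q. (mat_of_fun \<sigma> :: 'k mat) p q \<noteq> 0} = \<sigma> -` {p}" for p
    by (auto simp: mat_of_fun_def)
  moreover have "{p. (mat_of_fun \<sigma> :: 'k mat) p q \<noteq> 0} = {\<sigma> q}" for q
    by (auto simp: mat_of_fun_def)
  ultimately show ?thesis using finite_vimageI[OF _ assms] by (simp add: RCFM_def)
qed

lemma mtrans_mat_of_fun_mmul:
  fixes M :: "'k::field mat"
  shows "mmul (mtrans (mat_of_fun \<sigma>)) M q j = M (\<sigma> q) j"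
proof -
  have "{l. mtrans (mat_of_fun \<sigma> :: 'k::field mat) q l \<noteq> 0} = {\<sigma> q}"
    by (auto simp: mat_of_fun_def mtrans_def)
  then show ?thesis by (simp add: mmul_def mat_of_fun_def mtrans_def)
qed

lemma mat_of_fun_mmul_image:
  fixes M :: "'k::field mat"
  assumes "inj \<sigma>"
  shows "mmul (mat_of_fun \<sigma>) M (\<sigma> q) j = M q j"
proof -
  have "{l. (mat_of_fun \<sigma> :: 'k::field mat) (\<sigma> q) l \<noteq> 0} = {q}"
    using assms by (auto simp: mat_of_fun_def inj_def)
  then show ?thesis by (simp add: mmul_def mat_of_fun_def)
qed

lemma mat_of_fun_mmul_notin_range:
  fixes M :: "'k::field mat"
  assumes "p \<notin> range \<sigma>"
  shows "mmul (mat_of_fun \<sigma>) M p j = 0"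
proof -
  have "{l. (mat_of_fun \<sigma> :: 'k::field mat) p l \<noteq> 0} = {}"
    using assms by (auto simp: mat_of_fun_def)
  then show ?thesis unfolding mmul_def by (simp only: sum.empty)
qed

lemma mtrans_mat_of_fun_mmul_mat_of_fun:
  "mmul (mtrans (mat_of_fun \<sigma>)) (mat_of_fun \<tau>) = (\<lambda>q j. if \<sigma> q = \<tau> j then 1 else (0::'k::field))"
  by (intro ext) (simp only: mtrans_mat_of_fun_mmul, simp add: mat_of_fun_def)

lemma mat_of_fun_mmul_mtrans:
  assumes "inj \<sigma>"
  shows "mmul (mat_of_fun \<sigma>) (mtrans (mat_of_fun \<sigma>)) =
    (\<lambda>p q. if p \<in> range \<sigma> \<and> p = q then 1 else (0::'k::field))"
proof (intro ext)
  fix p q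
  show "mmul (mat_of_fun \<sigma>) (mtrans (mat_of_fun \<sigma>)) p q =
      (if p \<in> range \<sigma> \<and> p = q then 1 else (0::'k))"
  proof (cases "p \<in> range \<sigma>")
    case True
    then obtain c where c: "p = \<sigma> c" by auto
    then have "mmul (mat_of_fun \<sigma>) (mtrans (mat_of_fun \<sigma>)) p q = (mtrans (mat_of_fun \<sigma>) c q :: 'k)"
      by (simp only: mat_of_fun_mmul_image[OF assms])
    then show ?thesis using c by (auto simp: mtrans_def mat_of_fun_def)
  next
    case False
    then show ?thesis by (simp add: mat_of_fun_mmul_notin_range)
  qed
qed

lemma mat_of_fun_isometry:
  assumes "inj \<sigma>"
  shows "mmul (mtrans (mat_of_fun \<sigma>)) (mat_of_fun \<sigma>) = mident"
  by (simp add: mtrans_mat_of_fun_mmul_mat_of_fun inj_eq[OF assms] mident_def)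

lemma mat_of_fun_orthogonal:
  assumes "range \<sigma> \<inter> range \<tau> = {}"
  shows "mmul (mtrans (mat_of_fun \<sigma>)) (mat_of_fun \<tau>) = mzero"
  using assms by (auto simp: mtrans_mat_of_fun_mmul_mat_of_fun mzero_def fun_eq_iff)

lemma mat_of_fun_complement:
  assumes "inj \<sigma>" "inj \<tau>" "range \<tau> = - range \<sigma>"
  shows "mmul (mat_of_fun \<tau>) (mtrans (mat_of_fun \<tau>)) =
    msub mident (mmul (mat_of_fun \<sigma>) (mtrans (mat_of_fun \<sigma>)))"
  using assms by (auto simp: mat_of_fun_mmul_mtrans msub_def mident_def fun_eq_iff)

lemma mat_of_fun_no_fixed:
  fixes s :: "'k::field mat"
  assumes orbits: "\<And>q. infinite (range (\<lambda>n. (\<sigma> ^^ n) q))"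
    and s: "s \<in> RCFM" and fixed: "mmul (mtrans (mat_of_fun \<sigma>)) s = s"
  shows "s = mzero"
proof (intro ext)
  fix q j
  have step: "s (\<sigma> p) j = s p j" for p
    using mtrans_mat_of_fun_mmul[of \<sigma> s p j] fixed by simp
  have orbit: "s ((\<sigma> ^^ n) q) j = s q j" for n
    by (induction n) (simp_all add: step)
  show "s q j = mzero q j"
  proof (rule ccontr)
    assume "s q j \<noteq> mzero q j"
    then have "range (\<lambda>n. (\<sigma> ^^ n) q) \<subseteq> {i. s i j \<noteq> 0}"
      using orbit by (auto simp: mzero_def)
    moreover have "finite {i. s i j \<noteq> 0}" using s by (simp add: RCFM_def)
    ultimately show False using orbits[of q] finite_subset by blast
  qed
qed

lemma infinite_orbit_if_increasing:
  fixes \<sigma> :: "nat \<Rightarrow> nat"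
  assumes "\<And>q. q < \<sigma> q"
  shows "infinite (range (\<lambda>n. (\<sigma> ^^ n) q))"
proof -
  have "strict_mono (\<lambda>n. (\<sigma> ^^ n) q)"
    unfolding strict_mono_Suc_iff by (simp add: assms)
  then have "inj (\<lambda>n. (\<sigma> ^^ n) q)" by (rule strict_mono_imp_inj_on)
  then show ?thesis using finite_imageD infinite_UNIV_nat by blast
qed

lemma short_exact_mat_of_fun_range:
  assumes "inj \<sigma>" "\<And>q. infinite (range (\<lambda>n. (\<sigma> ^^ n) q))"
  shows "\<exists>f g. short_exact (mat_of_fun \<sigma> :: 'k::field mat)
    (msub mident (mat_of_fun \<sigma>)) (msub mident (mtrans (mat_of_fun \<sigma>))) f g"
  using assms
  by (intro short_exact_isometry_range mat_of_fun_in_RCFM mat_of_fun_isometry mat_of_fun_no_fixed)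

lemma short_exact_mat_of_fun_complement:
  fixes \<sigma> \<tau> :: "nat \<Rightarrow> nat"
  assumes "inj \<sigma>" "\<And>q. infinite (range (\<lambda>n. (\<sigma> ^^ n) q))"
    and "inj \<tau>" "range \<tau> = - range \<sigma>"
  shows "\<exists>f g. short_exact (mzero :: 'k::field mat)
    (msub mident (mat_of_fun \<sigma>)) (msub mident (mtrans (mat_of_fun \<sigma>))) f g"
  using assms
  by (intro short_exact_isometry_complement[where Q = "mat_of_fun \<tau>"] mat_of_fun_in_RCFM
      mat_of_fun_isometry mat_of_fun_no_fixed mat_of_fun_orthogonal mat_of_fun_complement) auto

section \<open>The matrices \<open>A\<close> and \<open>B\<close>\<close>

lemma matA_eq_mat_of_fun: "matA = mat_of_fun Suc"
  by (simp add: matA_def mat_of_fun_def fun_eq_iff)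

text \<open>Position \<open>p = tri m + i\<close> with \<open>i \<le> m\<close> is entry \<open>i\<close> of row \<open>m\<close> of the triangle
  \<open>{0}, {1,2}, {3,4,5}, \<dots>\<close>; \<open>B\<close> is the matrix of the map moving each entry one row down.\<close>

definition tri :: "nat \<Rightarrow> nat" where
  "tri n = n * (n + 1) div 2"

lemma tri_Suc: "tri (Suc m) = tri m + Suc m"
proof -
  have "Suc m * (Suc m + 1) = m * (m + 1) + 2 * Suc m" by (simp add: algebra_simps)
  then show ?thesis unfolding tri_def by simp
qed

lemma tri_mono: "m \<le> n \<Longrightarrow> tri m \<le> tri n"
  unfolding tri_def by (intro div_le_mono mult_le_mono) auto

lemma tri_decomp_exists: "\<exists>m i. i \<le> m \<and> p = tri m + i"
proof (induction p)
  case 0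
  show ?case by (rule exI[of _ 0]) (simp add: tri_def)
next
  case (Suc p)
  then obtain m i where mi: "i \<le> m" "p = tri m + i" by blast
  show ?case
  proof (cases "i < m")
    case True
    then show ?thesis using mi by (intro exI[of _ m] exI[of _ "Suc i"]) auto
  next
    case False
    then show ?thesis using mi by (intro exI[of _ "Suc m"] exI[of _ 0]) (auto simp: tri_Suc)
  qed
qed

lemma tri_decomp_unique:
  assumes "i \<le> m" "i' \<le> m'" "tri m + i = tri m' + i'"
  shows "m = m' \<and> i = i'"
proof -
  have less: "tri m + i < tri m' + i'" if "i \<le> m" "m < m'" for m m' i i'
  proof -
    have "tri m + i < tri (Suc m)" using that(1) by (simp add: tri_Suc)
    also have "\<dots> \<le> tri m'" using that(2) by (intro tri_mono) simp
    finally show ?thesis by simp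
  qed
  have "m = m'" using less[of i m m' i'] less[of i' m' m i] assms by (cases m m' rule: linorder_cases) auto
  then show ?thesis using assms(3) by simp
qed

definition tri_row :: "nat \<Rightarrow> nat" where
  "tri_row p = (SOME m. \<exists>i. i \<le> m \<and> p = tri m + i)"

definition tri_col :: "nat \<Rightarrow> nat" where
  "tri_col p = p - tri (tri_row p)"

lemma tri_row_col: "tri_col p \<le> tri_row p \<and> p = tri (tri_row p) + tri_col p"
proof -
  have "\<exists>i. i \<le> tri_row p \<and> p = tri (tri_row p) + i"
    unfolding tri_row_def by (rule someI_ex) (use tri_decomp_exists in blast)
  then show ?thesis unfolding tri_col_def by auto
qed

lemma tri_row_col_eq:
  assumes "i \<le> m"
  shows "tri_row (tri m + i) = m" "tri_col (tri m + i) = i"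
  using tri_decomp_unique[OF assms tri_row_col[THEN conjunct1], of "tri m + i"]
    tri_row_col[of "tri m + i"] by auto

definition tri_down :: "nat \<Rightarrow> nat" where
  "tri_down p = tri (Suc (tri_row p)) + tri_col p"

definition tri_diag :: "nat \<Rightarrow> nat" where
  "tri_diag m = tri m + m"

lemma inj_tri_down: "inj tri_down"
proof (rule injI)
  fix p p' assume "tri_down p = tri_down p'"
  then have "Suc (tri_row p) = Suc (tri_row p') \<and> tri_col p = tri_col p'"
    unfolding tri_down_def by (intro tri_decomp_unique) (use tri_row_col in \<open>auto intro: le_SucI\<close>)
  then show "p = p'" using tri_row_col[of p] tri_row_col[of p'] by simp
qed

lemma less_tri_down: "p < tri_down p"
  using tri_row_col[of p] unfolding tri_down_def by (simp add: tri_Suc)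

lemma inj_tri_diag: "inj tri_diag"
  unfolding tri_diag_def by (rule injI) (use tri_decomp_unique in blast)

lemma range_tri_diag: "range tri_diag = - range tri_down"
proof (intro equalityI subsetI)
  fix p assume "p \<in> range tri_diag"
  then obtain m where m: "p = tri m + m" unfolding tri_diag_def by auto
  show "p \<in> - range tri_down"
  proof
    assume "p \<in> range tri_down"
    then obtain q where "p = tri (Suc (tri_row q)) + tri_col q" unfolding tri_down_def by auto
    then have "m = Suc (tri_row q) \<and> m = tri_col q"
      using tri_decomp_unique[of m m "tri_col q" "Suc (tri_row q)"] m tri_row_col[of q] by auto
    then show False using tri_row_col[of q] by simp
  qed
next
  fix p assume p: "p \<in> - range tri_down"
  obtain m i where mi: "i \<le> m" "p = tri m + i" using tri_decomp_exists by blast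
  show "p \<in> range tri_diag"
  proof (cases "i < m")
    case True
    then obtain m' where m': "m = Suc m'" "i \<le> m'" by (cases m) auto
    then have "tri_down (tri m' + i) = p" unfolding tri_down_def using tri_row_col_eq mi by simp
    then show ?thesis using p by auto
  next
    case False
    then show ?thesis using mi unfolding tri_diag_def by auto
  qed
qed

lemma matB_eq_mat_of_fun: "matB = mat_of_fun tri_down"
proof (intro ext)
  fix p q
  have "(\<exists>n i. 0 < n \<and> i < n \<and> p = n * (n + 1) div 2 + i \<and> q = (n - 1) * n div 2 + i)
    \<longleftrightarrow> p = tri_down q"
  proof
    assume "\<exists>n i. 0 < n \<and> i < n \<and> p = n * (n + 1) div 2 + i \<and> q = (n - 1) * n div 2 + i"
    then obtain n i where n: "0 < n" "i < n" "p = n * (n + 1) div 2 + i" "q = (n - 1) * n div 2 + i"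
      by blast
    then obtain m where "n = Suc m" by (cases n) auto
    then have "i \<le> m" "p = tri (Suc m) + i" "q = tri m + i"
      using n unfolding tri_def by (simp_all add: mult.commute)
    then show "p = tri_down q" unfolding tri_down_def by (simp add: tri_row_col_eq)
  next
    assume "p = tri_down q"
    then show "\<exists>n i. 0 < n \<and> i < n \<and> p = n * (n + 1) div 2 + i \<and> q = (n - 1) * n div 2 + i"
      using tri_row_col[of q] unfolding tri_down_def tri_def
      by (intro exI[of _ "Suc (tri_row q)"] exI[of _ "tri_col q"]) (auto simp: mult.commute)
  qed
  then show "matB p q = mat_of_fun tri_down p q"
    unfolding matB_def mat_of_fun_def by simp
qed

theorem proposition7p11:
  shows "(\<exists>f g. short_exact (matA :: 'k::field mat) (msub mident matA) (msub mident (mtrans matA)) f g)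
       \<and> (\<exists>f g. short_exact (mzero :: 'k::field mat) (msub mident matB) (msub mident (mtrans matB)) f g)"
proof
  show "\<exists>f g. short_exact (matA :: 'k::field mat) (msub mident matA) (msub mident (mtrans matA)) f g"
    unfolding matA_eq_mat_of_fun
    by (rule short_exact_mat_of_fun_range[OF inj_Suc infinite_orbit_if_increasing[OF lessI]])
  show "\<exists>f g. short_exact (mzero :: 'k::field mat) (msub mident matB) (msub mident (mtrans matB)) f g"
    unfolding matB_eq_mat_of_fun
    by (rule short_exact_mat_of_fun_complement[OF inj_tri_down
          infinite_orbit_if_increasing[OF less_tri_down] inj_tri_diag range_tri_diag])
qed

end
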